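(* Let $l\ge1$ be an integer and let $a_{l0}$ be real $N(0,C_l)$ and $a_{l1},\dots,a_{ll}$ complex Gaussian with independent real and imaginary parts each $N(0,C_l/2)$, all independent, with $C_l>0$; set $a_{l,-m}=(-1)^m\overline{a_{lm}}$ and $\hat C_l=\frac{1}{2l+1}\sum_{m=-l}^l|a_{lm}|^2$. For $0\le m\le l$ put $u_{lm}=a_{lm}/\sqrt{C_l}$ and $\hat u_{lm}=a_{lm}/\sqrt{\hat C_l}$. Let $1\le m_1<\dots<m_k\le l$ and let $q_0,q_1,q_1',\dots,q_k,q_k'$ be nonnegative integers with $q_0+\sum_{i=1}^k(q_i+q_i')=2p$ even. Then $$E\Big\{\hat u_{l0}^{q_0}\prod_{i=1}^k\hat u_{lm_i}^{q_i}\big(\overline{\hat u_{lm_i}}\big)^{q_i'}\Big\}=E\Big\{u_{l0}^{q_0}\prod_{i=1}^k u_{lm_i}^{q_i}\big(\overline{u_{lm_i}}\big)^{q_i'}\Big\}\,g(l;p),\qquad g(l;p)=\prod_{j=1}^p\frac{2l+1}{2l+2j-1}.$$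
   Context: $\overline{z}$ denotes complex conjugation. The variables $a_{lm}$ are the degree-$l$ spherical harmonic coefficients of a zero-mean isotropic Gaussian field with angular power spectrum $C_l$. *)

theory Defs
  imports "HOL-Probability.Probability"
begin

definition coeff_coord :: "(nat \<Rightarrow> 'a \<Rightarrow> complex) \<Rightarrow> nat \<times> bool \<Rightarrow> 'a \<Rightarrow> real" where
  "coeff_coord a = (\<lambda>(m, b) \<omega>. if b then Im (a m \<omega>) else Re (a m \<omega>))"

text \<open>Index set of the independent real Gaussian coordinates (a_{l0} is real).\<close>
definition coeff_index :: "nat \<Rightarrow> (nat \<times> bool) set" where
  "coeff_index l = {(0, False)} \<union> ({1..l} \<times> UNIV)"

definition coeff_ext :: "(nat \<Rightarrow> 'a \<Rightarrow> complex) \<Rightarrow> int \<Rightarrow> 'a \<Rightarrow> complex" where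
  "coeff_ext a m \<omega> = (if 0 \<le> m then a (nat m) \<omega> else (-1) ^ nat (- m) * cnj (a (nat (- m)) \<omega>))"

definition Chat :: "nat \<Rightarrow> (nat \<Rightarrow> 'a \<Rightarrow> complex) \<Rightarrow> 'a \<Rightarrow> real" where
  "Chat l a \<omega> = (1 / (2 * real l + 1)) * (\<Sum>m\<in>{- int l..int l}. (cmod (coeff_ext a m \<omega>))\<^sup>2)"

definition g_lp :: "nat \<Rightarrow> nat \<Rightarrow> real" where
  "g_lp l p = (\<Prod>j\<in>{1..p}. (2 * real l + 1) / (2 * real l + 2 * real j - 1))"

definition monomial_u :: "(nat \<Rightarrow> complex) \<Rightarrow> nat \<Rightarrow> (nat \<Rightarrow> nat) \<Rightarrow> nat \<Rightarrow> (nat \<Rightarrow> nat) \<Rightarrow> (nat \<Rightarrow> nat) \<Rightarrow> complex" where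
  "monomial_u u k ms q0 q q' =
     u 0 ^ q0 * (\<Prod>i\<in>{1..k}. u (ms i) ^ q i * cnj (u (ms i)) ^ q' i)"

end

theory Submission
  imports Defs
begin

text \<open>
  Collect the real and imaginary parts of a_l0, ..., a_ll into a vector x of n = 2l + 1 independent
  centred normal coordinates with standard deviations s_i, and put Q(x) = sum_i x_i^2 / s_i^2, so
  that hat C_l = C_l Q / n. The monomial in the hat u_lm is then (n / C_l)^p F(x) / Q(x)^p, where F
  is the same monomial in the a_lm, which is positively homogeneous of degree 2p.

  For G >= 0 positively homogeneous of degree 2d >= 2, write G / Q as the integral over t >= 1 of
  G exp(-(t - 1) Q / 2) / 2. The factor t^(n/2) exp(-(t - 1) Q / 2) turns the Gaussian density into
  that of x / sqrt t, so by homogeneity E[G exp(-(t - 1) Q / 2)] = t^(-n/2 - d) E[G], and Fubini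
  gives E[G / Q] = E[G] / (n + 2d - 2). Iterating, E[F / Q^p] = E[F] / prod_(j<p) (n + 2j), which
  after the normalisations is the factor g(l;p).
\<close>

section \<open>Products of centred normal distributions\<close>

lemma density_PiM_prod:
  fixes g :: "'i \<Rightarrow> 'a \<Rightarrow> ennreal"
  assumes fin: "finite I" and "product_sigma_finite M"
    and "product_sigma_finite (\<lambda>i. density (M i) (g i))"
    and g[measurable]: "\<And>i. g i \<in> borel_measurable (M i)"
  shows "density (PiM I M) (\<lambda>x. \<Prod>i\<in>I. g i (x i)) = PiM I (\<lambda>i. density (M i) (g i))"
proof -
  interpret M: product_sigma_finite M by fact
  interpret D: product_sigma_finite "\<lambda>i. density (M i) (g i)" by fact
  show ?thesis
  proof (rule D.PiM_eqI[OF fin])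
    show "sets (density (PiM I M) (\<lambda>x. \<Prod>i\<in>I. g i (x i))) = sets (PiM I (\<lambda>i. density (M i) (g i)))"
      by (subst sets_density) (intro sets_PiM_cong refl, simp)
  next
    fix A assume A: "\<And>i. i \<in> I \<Longrightarrow> A i \<in> sets (density (M i) (g i))"
    then have [measurable]: "\<And>i. i \<in> I \<Longrightarrow> A i \<in> sets (M i)" by simp
    have box: "indicator (Pi\<^sub>E I A) x = (\<Prod>i\<in>I. indicator (A i) (x i) :: ennreal)"
      if "x \<in> space (PiM I M)" for x
    proof (cases "x \<in> Pi\<^sub>E I A")
      case True
      then show ?thesis by (simp add: PiE_iff)
    next
      case False
      moreover have "x \<in> extensional I" using that by (simp add: space_PiM PiE_def)
      ultimately obtain i where "i \<in> I" "x i \<notin> A i" by (auto simp: PiE_def)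
      then have "(\<Prod>i\<in>I. indicator (A i) (x i) :: ennreal) = 0"
        using fin by (intro prod_zero bexI[of _ i]) auto
      with False show ?thesis by simp
    qed
    have "emeasure (density (PiM I M) (\<lambda>x. \<Prod>i\<in>I. g i (x i))) (Pi\<^sub>E I A)
        = (\<integral>\<^sup>+x. (\<Prod>i\<in>I. g i (x i)) * indicator (Pi\<^sub>E I A) x \<partial>PiM I M)"
      using fin by (intro emeasure_density) (auto intro!: sets_PiM_I_finite)
    also have "\<dots> = (\<integral>\<^sup>+x. (\<Prod>i\<in>I. g i (x i) * indicator (A i) (x i)) \<partial>PiM I M)"
      by (intro nn_integral_cong) (simp add: box prod.distrib)
    also have "\<dots> = (\<Prod>i\<in>I. \<integral>\<^sup>+y. g i y * indicator (A i) y \<partial>M i)"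
      using fin by (intro M.product_nn_integral_prod) auto
    also have "\<dots> = (\<Prod>i\<in>I. emeasure (density (M i) (g i)) (A i))"
      by (intro prod.cong refl) (simp add: emeasure_density)
    finally show "emeasure (density (PiM I M) (\<lambda>x. \<Prod>i\<in>I. g i (x i))) (Pi\<^sub>E I A)
        = (\<Prod>i\<in>I. emeasure (density (M i) (g i)) (A i))" .
  qed
qed

definition gaussian_product :: "'i set \<Rightarrow> ('i \<Rightarrow> real) \<Rightarrow> ('i \<Rightarrow> real) measure" where
  "gaussian_product I \<sigma> = PiM I (\<lambda>i. density lborel (normal_density 0 (\<sigma> i)))"

definition quad_form :: "'i set \<Rightarrow> ('i \<Rightarrow> real) \<Rightarrow> ('i \<Rightarrow> real) \<Rightarrow> real" where
  "quad_form I \<sigma> x = (\<Sum>i\<in>I. (x i)\<^sup>2 / (\<sigma> i)\<^sup>2)"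

definition scale_on :: "'i set \<Rightarrow> real \<Rightarrow> ('i \<Rightarrow> real) \<Rightarrow> 'i \<Rightarrow> real" where
  "scale_on I c x = restrict (\<lambda>i. c * x i) I"

lemma sets_gaussian_product [measurable_cong]:
  "sets (gaussian_product I \<sigma>) = sets (PiM I (\<lambda>_. borel))"
  unfolding gaussian_product_def by (intro sets_PiM_cong) simp_all

lemma space_gaussian_product: "space (gaussian_product I \<sigma>) = space (PiM I (\<lambda>_. borel))"
  using sets_eq_imp_space_eq[OF sets_gaussian_product] .

lemma prob_space_gaussian_product:
  "(\<And>i. \<sigma> i > 0) \<Longrightarrow> prob_space (gaussian_product I \<sigma>)"
  unfolding gaussian_product_def by (intro prob_space_PiM prob_space_normal_density)

lemma product_prob_space_normal_density:
  "(\<And>i. \<sigma> i > 0) \<Longrightarrow> product_prob_space (\<lambda>i. density lborel (normal_density 0 (\<sigma> i)))"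
  by (intro product_prob_spaceI prob_space_normal_density)

lemma quad_form_nonneg [simp]: "quad_form I \<sigma> x \<ge> 0"
  unfolding quad_form_def by (intro sum_nonneg) simp

lemma quad_form_measurable [measurable]: "quad_form I \<sigma> \<in> borel_measurable (PiM I (\<lambda>_. borel))"
  unfolding quad_form_def by measurable

lemma quad_form_scale_on: "quad_form I \<sigma> (scale_on I c x) = c\<^sup>2 * quad_form I \<sigma> x"
  unfolding quad_form_def scale_on_def
  by (simp add: sum_distrib_left power_mult_distrib)

lemma scale_on_measurable [measurable]:
  "scale_on I c \<in> PiM I (\<lambda>_. borel) \<rightarrow>\<^sub>M PiM I (\<lambda>_. borel)"
  unfolding scale_on_def by measurable

lemma normal_density_mult_exp:
  assumes "\<sigma> > 0" "r > 0"
  shows "normal_density 0 \<sigma> y * (r * exp (- (r\<^sup>2 - 1) * y\<^sup>2 / (2 * \<sigma>\<^sup>2))) = normal_density 0 (\<sigma> / r) y"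
proof -
  have "sqrt (2 * pi * (\<sigma> / r)\<^sup>2) = sqrt (2 * pi * \<sigma>\<^sup>2) / r"
    using assms by (simp add: power_divide real_sqrt_divide real_sqrt_mult)
  moreover have "exp (- y\<^sup>2 / (2 * \<sigma>\<^sup>2)) * exp (- (r\<^sup>2 - 1) * y\<^sup>2 / (2 * \<sigma>\<^sup>2)) = exp (- y\<^sup>2 / (2 * (\<sigma> / r)\<^sup>2))"
    using assms by (simp add: exp_add[symmetric] field_simps)
  ultimately show ?thesis
    using assms unfolding normal_density_def by (simp add: field_simps)
qed

lemma density_gaussian_product_exp:
  assumes fin: "finite I" and \<sigma>: "\<And>i. \<sigma> i > 0" and r: "r > 0"
  shows "density (gaussian_product I \<sigma>) (\<lambda>x. r ^ card I * exp (- (r\<^sup>2 - 1) * quad_form I \<sigma> x / 2))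
       = gaussian_product I (\<lambda>i. \<sigma> i / r)"
proof -
  define g where "g i y = r * exp (- (r\<^sup>2 - 1) * y\<^sup>2 / (2 * (\<sigma> i)\<^sup>2))" for i y
  have g_nonneg: "g i y \<ge> 0" for i y
    using r by (simp add: g_def)
  have tilt: "density (density lborel (normal_density 0 (\<sigma> i))) (g i) = density lborel (normal_density 0 (\<sigma> i / r))" for i
  proof -
    have "ennreal (normal_density 0 (\<sigma> i) y) * ennreal (g i y) = ennreal (normal_density 0 (\<sigma> i / r) y)" for y
      using normal_density_mult_exp[OF \<sigma> r, where y=y] g_nonneg[of i y]
      by (simp add: g_def ennreal_mult[symmetric])
    then show ?thesis
      by (subst density_density_eq) (simp_all add: g_def)
  qed
  have "(\<Prod>i\<in>I. ennreal (g i (x i))) = ennreal (r ^ card I * exp (- (r\<^sup>2 - 1) * quad_form I \<sigma> x / 2))" for x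
    using g_nonneg
    by (simp add: prod_ennreal g_def prod.distrib exp_sum[OF fin, symmetric] quad_form_def
        sum_divide_distrib sum_distrib_left mult.commute[of 2])
  then have "density (gaussian_product I \<sigma>) (\<lambda>x. r ^ card I * exp (- (r\<^sup>2 - 1) * quad_form I \<sigma> x / 2))
      = density (gaussian_product I \<sigma>) (\<lambda>x. \<Prod>i\<in>I. ennreal (g i (x i)))"
    by simp
  also have "\<dots> = PiM I (\<lambda>i. density (density lborel (normal_density 0 (\<sigma> i))) (g i))"
    unfolding gaussian_product_def
  proof (rule density_PiM_prod[OF fin])
    show "product_sigma_finite (\<lambda>i. density (density lborel (normal_density 0 (\<sigma> i))) (g i))"
      unfolding tilt using \<sigma> r
      by (intro product_prob_space.axioms(1) product_prob_space_normal_density) simp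
  qed (use \<sigma> in \<open>auto simp: g_def intro!: product_prob_space.axioms(1) product_prob_space_normal_density\<close>)
  also have "\<dots> = gaussian_product I (\<lambda>i. \<sigma> i / r)"
    unfolding gaussian_product_def tilt ..
  finally show ?thesis .
qed

lemma distr_scale_gaussian_product:
  assumes fin: "finite I" and \<sigma>: "\<And>i. \<sigma> i > 0" and c: "c > 0"
  shows "distr (gaussian_product I \<sigma>) (gaussian_product I (\<lambda>i. c * \<sigma> i)) (scale_on I c)
       = gaussian_product I (\<lambda>i. c * \<sigma> i)"
proof -
  have scale_eq: "scale_on I c = compose I ((*) c)"
    by (simp add: fun_eq_iff scale_on_def compose_def)
  have coord: "distr (density lborel (normal_density 0 (\<sigma> i))) (density lborel (normal_density 0 (c * \<sigma> i))) ((*) c)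
      = density lborel (normal_density 0 (c * \<sigma> i))" for i
  proof -
    interpret prob_space "density lborel (normal_density 0 (\<sigma> i))"
      using \<sigma> by (rule prob_space_normal_density)
    have "distributed (density lborel (normal_density 0 (\<sigma> i))) lborel (\<lambda>y. y) (normal_density 0 (\<sigma> i))"
      by (simp add: distributed_def distr_id2)
    from normal_density_affine[OF this \<sigma>, of c 0] c
    show ?thesis by (simp add: distributed_def cong: distr_cong)
  qed
  show ?thesis
    unfolding gaussian_product_def scale_eq
    by (subst distr_PiM_finite_prob_space'[OF fin]) (use \<sigma> c in \<open>auto simp: coord intro: prob_space_normal_density\<close>)
qed

lemma nn_integral_gaussian_product_exp_tilt:
  assumes fin: "finite I" and \<sigma>: "\<And>i. \<sigma> i > 0" and r: "r > 0"
    and [measurable]: "G \<in> borel_measurable (PiM I (\<lambda>_. borel))"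
  shows "(\<integral>\<^sup>+x. ennreal (r ^ card I * exp (- (r\<^sup>2 - 1) * quad_form I \<sigma> x / 2)) * G x \<partial>gaussian_product I \<sigma>)
       = (\<integral>\<^sup>+x. G (scale_on I (1 / r) x) \<partial>gaussian_product I \<sigma>)"
proof -
  have "(\<integral>\<^sup>+x. ennreal (r ^ card I * exp (- (r\<^sup>2 - 1) * quad_form I \<sigma> x / 2)) * G x \<partial>gaussian_product I \<sigma>)
      = (\<integral>\<^sup>+x. G x \<partial>gaussian_product I (\<lambda>i. 1 / r * \<sigma> i))"
    using density_gaussian_product_exp[OF fin \<sigma> r]
    by (subst nn_integral_density[symmetric]) simp_all
  also have "\<dots> = (\<integral>\<^sup>+x. G x \<partial>distr (gaussian_product I \<sigma>) (gaussian_product I (\<lambda>i. 1 / r * \<sigma> i)) (scale_on I (1 / r)))"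
    using distr_scale_gaussian_product[OF fin \<sigma>, of "1 / r"] r by simp
  also have "\<dots> = (\<integral>\<^sup>+x. G (scale_on I (1 / r) x) \<partial>gaussian_product I \<sigma>)"
    by (rule nn_integral_distr) measurable
  finally show ?thesis .
qed

section \<open>Positively homogeneous functions of a Gaussian vector\<close>

definition pos_homogeneous :: "'i set \<Rightarrow> nat \<Rightarrow> (('i \<Rightarrow> real) \<Rightarrow> 'b::real_vector) \<Rightarrow> bool" where
  "pos_homogeneous I n G \<longleftrightarrow> (\<forall>c>0. \<forall>x. G (scale_on I c x) = c ^ n *\<^sub>R G x)"

lemma pos_homogeneousD: "pos_homogeneous I n G \<Longrightarrow> c > 0 \<Longrightarrow> G (scale_on I c x) = c ^ n *\<^sub>R G x"
  by (simp add: pos_homogeneous_def)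

lemma pos_homogeneous_add:
  "pos_homogeneous I n G \<Longrightarrow> pos_homogeneous I n H \<Longrightarrow> pos_homogeneous I n (\<lambda>x. G x + H x)"
  by (simp add: pos_homogeneous_def scaleR_add_right)

lemma pos_homogeneous_norm:
  "pos_homogeneous I n G \<Longrightarrow> pos_homogeneous I n (\<lambda>x. norm (G x))"
  by (simp add: pos_homogeneous_def)

lemma pos_homogeneous_Re: "pos_homogeneous I n F \<Longrightarrow> pos_homogeneous I n (\<lambda>x. Re (F x))"
  by (simp add: pos_homogeneous_def)

lemma pos_homogeneous_Im: "pos_homogeneous I n F \<Longrightarrow> pos_homogeneous I n (\<lambda>x. Im (F x))"
  by (simp add: pos_homogeneous_def)

lemma pos_homogeneous_divide_quad_form:
  assumes "pos_homogeneous I (2 * Suc d) G"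
  shows "pos_homogeneous I (2 * d) (\<lambda>x. G x / quad_form I \<sigma> x)"
  unfolding pos_homogeneous_def
proof (intro allI impI)
  fix c :: real and x assume "c > 0"
  then show "G (scale_on I c x) / quad_form I \<sigma> (scale_on I c x) = c ^ (2 * d) *\<^sub>R (G x / quad_form I \<sigma> x)"
    using pos_homogeneousD[OF assms \<open>c > 0\<close>, of x]
    by (simp add: quad_form_scale_on power_mult power2_eq_square)
qed

lemma pos_homogeneous_vanishes:
  fixes G :: "('i \<Rightarrow> real) \<Rightarrow> real"
  assumes fin: "finite I" and hom: "pos_homogeneous I n G" and n: "n \<ge> 1" and \<sigma>: "\<And>i. \<sigma> i > 0"
    and x: "x \<in> space (PiM I (\<lambda>_. borel))" and Q: "quad_form I \<sigma> x = 0"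
  shows "G x = 0"
proof -
  have "\<forall>i\<in>I. (x i)\<^sup>2 / (\<sigma> i)\<^sup>2 = 0"
    using Q fin by (simp add: quad_form_def sum_nonneg_eq_0_iff)
  then have "x i = 0" if "i \<in> I" for i
    using that \<sigma>[of i] by force
  then have "scale_on I 2 x = x"
    using x by (auto simp: scale_on_def space_PiM PiE_def extensional_def fun_eq_iff)
  then have "G x = 2 ^ n * G x"
    using pos_homogeneousD[OF hom, of 2 x] by simp
  moreover have "(2::real) ^ n > 1"
    using n by simp
  ultimately show ?thesis
    by (metis mult_cancel_right1 less_irrefl)
qed

lemma inverse_sqrt_power_mult_power:
  assumes "t > 0"
  shows "1 / (sqrt t ^ n * t ^ d) = t powr - (real n / 2 + real d)"
proof -
  have "sqrt t ^ n * t ^ d = t powr (real n / 2 + real d)"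
    using assms by (simp add: powr_add powr_realpow[symmetric] powr_half_sqrt[symmetric] powr_powr)
  then show ?thesis
    by (simp only: powr_minus_divide)
qed

lemma nn_integral_exp_tilt_homogeneous:
  assumes fin: "finite I" and \<sigma>: "\<And>i. \<sigma> i > 0" and t: "t > 0"
    and G[measurable]: "G \<in> borel_measurable (PiM I (\<lambda>_. borel))" and G_nonneg: "\<And>x. G x \<ge> 0"
    and hom: "pos_homogeneous I (2 * d) G"
  shows "(\<integral>\<^sup>+x. ennreal (exp (- (t - 1) * quad_form I \<sigma> x / 2)) * ennreal (G x) \<partial>gaussian_product I \<sigma>)
       = ennreal (t powr - (real (card I) / 2 + real d)) * (\<integral>\<^sup>+x. G x \<partial>gaussian_product I \<sigma>)"
proof -
  let ?N = "gaussian_product I \<sigma>" and ?Q = "quad_form I \<sigma>"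
  define r where "r = sqrt t"
  have r: "r > 0" "r\<^sup>2 = t"
    using t by (simp_all add: r_def)
  have "(\<integral>\<^sup>+x. ennreal (exp (- (t - 1) * ?Q x / 2)) * ennreal (G x) \<partial>?N)
      = (\<integral>\<^sup>+x. ennreal (1 / r ^ card I) * (ennreal (r ^ card I * exp (- (r\<^sup>2 - 1) * ?Q x / 2)) * ennreal (G x)) \<partial>?N)"
    using r by (intro nn_integral_cong) (simp add: ennreal_mult'[symmetric] mult.assoc[symmetric])
  also have "\<dots> = ennreal (1 / r ^ card I) * (\<integral>\<^sup>+x. ennreal (r ^ card I * exp (- (r\<^sup>2 - 1) * ?Q x / 2)) * ennreal (G x) \<partial>?N)"
    by (rule nn_integral_cmult) measurable
  also have "(\<integral>\<^sup>+x. ennreal (r ^ card I * exp (- (r\<^sup>2 - 1) * ?Q x / 2)) * ennreal (G x) \<partial>?N)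
      = (\<integral>\<^sup>+x. ennreal (G (scale_on I (1 / r) x)) \<partial>?N)"
    by (rule nn_integral_gaussian_product_exp_tilt[OF fin \<sigma> r(1)]) measurable
  also have "(\<integral>\<^sup>+x. ennreal (G (scale_on I (1 / r) x)) \<partial>?N) = (\<integral>\<^sup>+x. ennreal (1 / t ^ d) * ennreal (G x) \<partial>?N)"
    using r t pos_homogeneousD[OF hom, of "1 / r"] G_nonneg
    by (intro nn_integral_cong) (simp add: ennreal_mult[symmetric] power_mult power_one_over)
  also have "\<dots> = ennreal (1 / t ^ d) * (\<integral>\<^sup>+x. G x \<partial>?N)"
    by (simp add: nn_integral_cmult)
  also have "ennreal (1 / r ^ card I) * (ennreal (1 / t ^ d) * (\<integral>\<^sup>+x. G x \<partial>?N))
      = ennreal (t powr - (real (card I) / 2 + real d)) * (\<integral>\<^sup>+x. G x \<partial>?N)"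
    using t inverse_sqrt_power_mult_power[OF t, of "card I" d]
    by (simp add: r_def mult.assoc[symmetric] ennreal_mult'[symmetric])
  finally show ?thesis .
qed

lemma nn_integral_exp_tail:
  assumes "q > 0"
  shows "(\<integral>\<^sup>+t. ennreal (exp (- (t - 1) * q / 2)) * indicator {1..} t \<partial>lborel) = ennreal (2 / q)"
proof -
  have "((\<lambda>t. exp (q / 2) * exp (- (q / 2) * t)) has_integral exp (q / 2) * (exp (- (q / 2) * 1) / (q / 2))) {1..}"
    using assms by (intro has_integral_mult_right has_integral_exp_minus_to_infinity) simp
  moreover have "(\<lambda>t. exp (q / 2) * exp (- (q / 2) * t)) = (\<lambda>t. exp (- (t - 1) * q / 2))"
    by (simp add: fun_eq_iff exp_add[symmetric] algebra_simps)
  moreover have "exp (q / 2) * (exp (- (q / 2) * 1) / (q / 2)) = 2 / q"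
    using assms by (simp add: exp_minus field_simps)
  ultimately have "((\<lambda>t. exp (- (t - 1) * q / 2)) has_integral 2 / q) {1..}"
    by (simp only:)
  then show ?thesis
    by (intro nn_integral_has_integral_lebesgue') auto
qed

lemma ennreal_divide_eq_nn_integral_exp:
  assumes g: "g \<ge> 0" and q: "q \<ge> 0" and "q = 0 \<Longrightarrow> g = 0"
  shows "ennreal (g / q) = (\<integral>\<^sup>+t. ennreal (g * exp (- (t - 1) * q / 2) / 2) * indicator {1..} t \<partial>lborel)"
proof (cases "q = 0")
  case False
  with q have q: "q > 0"
    by simp
  have "(\<integral>\<^sup>+t. ennreal (g * exp (- (t - 1) * q / 2) / 2) * indicator {1..} t \<partial>lborel)
      = (\<integral>\<^sup>+t. ennreal (g / 2) * (ennreal (exp (- (t - 1) * q / 2)) * indicator {1..} t) \<partial>lborel)"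
    using g by (intro nn_integral_cong) (simp add: ennreal_mult ennreal_divide_numeral[symmetric] divide_ennreal_def ac_simps)
  also have "\<dots> = ennreal (g / 2) * (\<integral>\<^sup>+t. ennreal (exp (- (t - 1) * q / 2)) * indicator {1..} t \<partial>lborel)"
    by (rule nn_integral_cmult) simp
  also have "\<dots> = ennreal (g / q)"
    using g q by (simp only: nn_integral_exp_tail[OF q]) (simp add: ennreal_mult'[symmetric])
  finally show ?thesis ..
qed (use assms in simp)

lemma nn_integral_powr_tail:
  assumes "e < -1"
  shows "(\<integral>\<^sup>+t. ennreal (t powr e) * indicator {1..} t \<partial>lborel) = ennreal (- 1 / (e + 1))"
  using has_integral_powr_to_inf[OF assms zero_less_one]
  by (intro nn_integral_has_integral_lebesgue') auto

lemma nn_integral_divide_quad_form: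
  assumes fin: "finite I" and ne: "I \<noteq> {}" and \<sigma>: "\<And>i. \<sigma> i > 0"
    and G[measurable]: "G \<in> borel_measurable (PiM I (\<lambda>_. borel))" and G_nonneg: "\<And>x. G x \<ge> 0"
    and hom: "pos_homogeneous I (2 * d) G" and d: "d \<ge> 1"
  shows "(\<integral>\<^sup>+x. ennreal (G x / quad_form I \<sigma> x) \<partial>gaussian_product I \<sigma>)
       = ennreal (1 / (real (card I) + 2 * real d - 2)) * (\<integral>\<^sup>+x. G x \<partial>gaussian_product I \<sigma>)"
proof -
  let ?N = "gaussian_product I \<sigma>" and ?Q = "quad_form I \<sigma>"
  define e where "e = - (real (card I) / 2 + real d)"
  have "card I > 0"
    using fin ne by (simp add: card_gt_0_iff)
  then have e: "e < -1"
    using d by (simp add: e_def)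
  define K where "K x t = ennreal (G x * exp (- (t - 1) * ?Q x / 2) / 2) * indicator {1..} t" for x t
  interpret N: prob_space ?N
    using \<sigma> by (rule prob_space_gaussian_product)
  interpret pair_sigma_finite ?N lborel
    by (simp add: pair_sigma_finite_def N.sigma_finite_measure_axioms lborel.sigma_finite_measure_axioms)
  have inner: "ennreal (G x / ?Q x) = (\<integral>\<^sup>+t. K x t \<partial>lborel)" if "x \<in> space ?N" for x
    unfolding K_def using that G_nonneg pos_homogeneous_vanishes[OF fin hom _ \<sigma>] d
    by (intro ennreal_divide_eq_nn_integral_exp) (simp_all add: space_gaussian_product)
  have outer: "(\<integral>\<^sup>+x. K x t \<partial>?N) = ennreal (1 / 2) * (ennreal (t powr e) * indicator {1..} t) * (\<integral>\<^sup>+x. G x \<partial>?N)"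
    for t :: real
  proof -
    have "(\<integral>\<^sup>+x. K x t \<partial>?N)
        = (\<integral>\<^sup>+x. ennreal (1 / 2) * indicator {1..} t * (ennreal (exp (- (t - 1) * ?Q x / 2)) * ennreal (G x)) \<partial>?N)"
      using G_nonneg unfolding K_def
      by (intro nn_integral_cong) (simp add: ennreal_mult ennreal_divide_numeral[symmetric] divide_ennreal_def ac_simps)
    also have "\<dots> = ennreal (1 / 2) * indicator {1..} t * (\<integral>\<^sup>+x. ennreal (exp (- (t - 1) * ?Q x / 2)) * ennreal (G x) \<partial>?N)"
      by (rule nn_integral_cmult) measurable
    also have "\<dots> = ennreal (1 / 2) * (ennreal (t powr e) * indicator {1..} t) * (\<integral>\<^sup>+x. G x \<partial>?N)"
    proof (cases "t \<ge> 1")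
      case True
      then show ?thesis
        unfolding e_def by (subst nn_integral_exp_tilt_homogeneous[OF fin \<sigma> _ G G_nonneg hom]) (simp_all add: ac_simps)
    qed simp
    finally show ?thesis .
  qed
  have "(\<integral>\<^sup>+x. ennreal (G x / ?Q x) \<partial>?N) = (\<integral>\<^sup>+x. \<integral>\<^sup>+t. K x t \<partial>lborel \<partial>?N)"
    by (intro nn_integral_cong inner)
  also have "\<dots> = (\<integral>\<^sup>+t. \<integral>\<^sup>+x. K x t \<partial>?N \<partial>lborel)"
    by (rule Fubini'[symmetric]) (unfold K_def, measurable)
  also have "\<dots> = ennreal (1 / 2) * (\<integral>\<^sup>+t. ennreal (t powr e) * indicator {1..} t \<partial>lborel) * (\<integral>\<^sup>+x. G x \<partial>?N)"
    by (simp add: outer nn_integral_multc nn_integral_cmult)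
  also have "ennreal (1 / 2) * (\<integral>\<^sup>+t. ennreal (t powr e) * indicator {1..} t \<partial>lborel)
      = ennreal (1 / 2 * (- 1 / (e + 1)))"
    by (subst ennreal_mult') (simp_all add: nn_integral_powr_tail[OF e])
  also have "1 / 2 * (- 1 / (e + 1)) = 1 / (real (card I) + 2 * real d - 2)"
    using e by (simp add: e_def field_simps)
  finally show ?thesis .
qed

lemma nn_integral_divide_quad_form_power:
  assumes fin: "finite I" and ne: "I \<noteq> {}" and \<sigma>: "\<And>i. \<sigma> i > 0"
    and "G \<in> borel_measurable (PiM I (\<lambda>_. borel))" and "\<And>x. G x \<ge> 0"
    and "pos_homogeneous I (2 * p) G"
  shows "(\<integral>\<^sup>+x. ennreal (G x / quad_form I \<sigma> x ^ p) \<partial>gaussian_product I \<sigma>)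
       = ennreal (1 / (\<Prod>j<p. real (card I + 2 * j))) * (\<integral>\<^sup>+x. G x \<partial>gaussian_product I \<sigma>)"
  using assms(4-6)
proof (induction p arbitrary: G)
  case 0
  then show ?case by simp
next
  case (Suc p)
  let ?N = "gaussian_product I \<sigma>" and ?Q = "quad_form I \<sigma>"
  have "(\<integral>\<^sup>+x. ennreal (G x / ?Q x ^ Suc p) \<partial>?N) = (\<integral>\<^sup>+x. ennreal (G x / ?Q x / ?Q x ^ p) \<partial>?N)"
    by simp
  also have "\<dots> = ennreal (1 / (\<Prod>j<p. real (card I + 2 * j))) * (\<integral>\<^sup>+x. ennreal (G x / ?Q x) \<partial>?N)"
  proof (rule Suc.IH)
    show "(\<lambda>x. G x / ?Q x) \<in> borel_measurable (PiM I (\<lambda>_. borel))"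
      using Suc.prems(1) by measurable
    show "G x / ?Q x \<ge> 0" for x
      using Suc.prems(2)[of x] quad_form_nonneg[of I \<sigma> x] by (rule divide_nonneg_nonneg)
    show "pos_homogeneous I (2 * p) (\<lambda>x. G x / ?Q x)"
      using Suc.prems(3) by (rule pos_homogeneous_divide_quad_form)
  qed
  also have "(\<integral>\<^sup>+x. ennreal (G x / ?Q x) \<partial>?N) = ennreal (1 / real (card I + 2 * p)) * (\<integral>\<^sup>+x. G x \<partial>?N)"
    using nn_integral_divide_quad_form[OF fin ne \<sigma> Suc.prems] by simp
  also have "ennreal (1 / (\<Prod>j<p. real (card I + 2 * j))) * (ennreal (1 / real (card I + 2 * p)) * (\<integral>\<^sup>+x. G x \<partial>?N))
      = ennreal (1 / (\<Prod>j<Suc p. real (card I + 2 * j))) * (\<integral>\<^sup>+x. G x \<partial>?N)"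
    by (simp add: mult.assoc[symmetric] ennreal_mult'[symmetric] prod_nonneg)
  finally show ?case .
qed

lemma integrable_complex_iff:
  fixes f :: "'a \<Rightarrow> complex"
  shows "integrable M f \<longleftrightarrow> integrable M (\<lambda>x. Re (f x)) \<and> integrable M (\<lambda>x. Im (f x))"
proof (intro iffI conjI)
  assume "integrable M (\<lambda>x. Re (f x)) \<and> integrable M (\<lambda>x. Im (f x))"
  then have "integrable M (\<lambda>x. of_real (Re (f x)))" "integrable M (\<lambda>x. \<i> * of_real (Im (f x)))"
    by auto
  then have "integrable M (\<lambda>x. of_real (Re (f x)) + \<i> * of_real (Im (f x)))"
    by (rule Bochner_Integration.integrable_add)
  then show "integrable M f"
    by (simp add: complex_eq[symmetric])
qed auto

lemma integral_divide_quad_form_power_nonneg: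
  assumes fin: "finite I" and ne: "I \<noteq> {}" and \<sigma>: "\<And>i. \<sigma> i > 0"
    and G[measurable]: "G \<in> borel_measurable (PiM I (\<lambda>_. borel))" and G_nonneg: "\<And>x. G x \<ge> 0"
    and hom: "pos_homogeneous I (2 * p) G"
  shows "(\<integral>x. G x / quad_form I \<sigma> x ^ p \<partial>gaussian_product I \<sigma>)
       = (\<integral>x. G x \<partial>gaussian_product I \<sigma>) / (\<Prod>j<p. real (card I + 2 * j))"
proof -
  let ?N = "gaussian_product I \<sigma>" and ?Q = "quad_form I \<sigma>"
  have "(\<integral>x. G x / ?Q x ^ p \<partial>?N) = enn2real (\<integral>\<^sup>+x. ennreal (G x / ?Q x ^ p) \<partial>?N)"
    using G_nonneg by (intro integral_eq_nn_integral) (auto intro: divide_nonneg_nonneg)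
  also have "\<dots> = enn2real (ennreal (1 / (\<Prod>j<p. real (card I + 2 * j))) * (\<integral>\<^sup>+x. G x \<partial>?N))"
    by (simp only: nn_integral_divide_quad_form_power[OF fin ne \<sigma> G G_nonneg hom])
  also have "\<dots> = (\<integral>x. G x \<partial>?N) / (\<Prod>j<p. real (card I + 2 * j))"
    using G_nonneg by (simp add: enn2real_mult prod_nonneg integral_eq_nn_integral)
  finally show ?thesis .
qed

lemma integrable_divide_quad_form_power_iff:
  fixes H :: "('i \<Rightarrow> real) \<Rightarrow> real"
  assumes fin: "finite I" and ne: "I \<noteq> {}" and \<sigma>: "\<And>i. \<sigma> i > 0"
    and H[measurable]: "H \<in> borel_measurable (PiM I (\<lambda>_. borel))"
    and hom: "pos_homogeneous I (2 * p) H"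
  shows "integrable (gaussian_product I \<sigma>) (\<lambda>x. H x / quad_form I \<sigma> x ^ p)
     \<longleftrightarrow> integrable (gaussian_product I \<sigma>) H"
proof -
  let ?N = "gaussian_product I \<sigma>" and ?Q = "quad_form I \<sigma>"
  have "card I > 0"
    using fin ne by (simp add: card_gt_0_iff)
  then have P: "(\<Prod>j<p. real (card I + 2 * j)) > 0"
    by (intro prod_pos) simp
  have "(\<integral>\<^sup>+x. ennreal (norm (H x / ?Q x ^ p)) \<partial>?N) = (\<integral>\<^sup>+x. ennreal (\<bar>H x\<bar> / ?Q x ^ p) \<partial>?N)"
    by (intro nn_integral_cong) simp
  also have "\<dots> = ennreal (1 / (\<Prod>j<p. real (card I + 2 * j))) * (\<integral>\<^sup>+x. ennreal (norm (H x)) \<partial>?N)"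
    using nn_integral_divide_quad_form_power[OF fin ne \<sigma> _ _ pos_homogeneous_norm[OF hom]] by simp
  finally show ?thesis
    using P \<open>card I > 0\<close> by (auto simp: integrable_iff_bounded ennreal_mult_less_top)
qed

lemma integral_divide_quad_form_power:
  fixes H :: "('i \<Rightarrow> real) \<Rightarrow> real"
  assumes fin: "finite I" and ne: "I \<noteq> {}" and \<sigma>: "\<And>i. \<sigma> i > 0"
    and H[measurable]: "H \<in> borel_measurable (PiM I (\<lambda>_. borel))"
    and hom: "pos_homogeneous I (2 * p) H" and int: "integrable (gaussian_product I \<sigma>) H"
  shows "(\<integral>x. H x / quad_form I \<sigma> x ^ p \<partial>gaussian_product I \<sigma>)
       = (\<integral>x. H x \<partial>gaussian_product I \<sigma>) / (\<Prod>j<p. real (card I + 2 * j))"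
proof -
  let ?N = "gaussian_product I \<sigma>" and ?Q = "quad_form I \<sigma>" and ?P = "\<Prod>j<p. real (card I + 2 * j)"
  define A where "A x = \<bar>H x\<bar>" for x
  define B where "B x = H x + \<bar>H x\<bar>" for x
  have A[measurable]: "A \<in> borel_measurable (PiM I (\<lambda>_. borel))"
    and B[measurable]: "B \<in> borel_measurable (PiM I (\<lambda>_. borel))"
    unfolding A_def B_def by measurable
  have hom_A: "pos_homogeneous I (2 * p) A" and hom_B: "pos_homogeneous I (2 * p) B"
    unfolding A_def B_def using pos_homogeneous_norm[OF hom] pos_homogeneous_add[OF hom] by auto
  have int_A: "integrable ?N A" and int_B: "integrable ?N B"
    unfolding A_def B_def using int by auto
  have "(\<integral>x. H x / ?Q x ^ p \<partial>?N) = (\<integral>x. B x / ?Q x ^ p - A x / ?Q x ^ p \<partial>?N)"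
    by (simp add: A_def B_def flip: diff_divide_distrib)
  also have "\<dots> = (\<integral>x. B x / ?Q x ^ p \<partial>?N) - (\<integral>x. A x / ?Q x ^ p \<partial>?N)"
    using int_A int_B
    by (intro Bochner_Integration.integral_diff)
      (simp_all add: integrable_divide_quad_form_power_iff[OF fin ne \<sigma> A hom_A]
        integrable_divide_quad_form_power_iff[OF fin ne \<sigma> B hom_B])
  also have "\<dots> = (\<integral>x. B x \<partial>?N) / ?P - (\<integral>x. A x \<partial>?N) / ?P"
    using integral_divide_quad_form_power_nonneg[OF fin ne \<sigma> A _ hom_A]
      integral_divide_quad_form_power_nonneg[OF fin ne \<sigma> B _ hom_B]
    by (simp add: A_def B_def)
  also have "\<dots> = ((\<integral>x. B x \<partial>?N) - (\<integral>x. A x \<partial>?N)) / ?P"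
    by (simp only: diff_divide_distrib)
  also have "(\<integral>x. B x \<partial>?N) - (\<integral>x. A x \<partial>?N) = (\<integral>x. H x \<partial>?N)"
    using int int_A by (simp add: B_def A_def[symmetric])
  finally show ?thesis .
qed

lemma integral_divide_quad_form_power_complex:
  fixes F :: "('i \<Rightarrow> real) \<Rightarrow> complex"
  assumes fin: "finite I" and ne: "I \<noteq> {}" and \<sigma>: "\<And>i. \<sigma> i > 0"
    and F[measurable]: "F \<in> borel_measurable (PiM I (\<lambda>_. borel))"
    and hom: "pos_homogeneous I (2 * p) F"
    and int: "integrable (gaussian_product I \<sigma>) (\<lambda>x. F x / of_real (quad_form I \<sigma> x ^ p))"
  shows "(\<integral>x. F x / of_real (quad_form I \<sigma> x ^ p) \<partial>gaussian_product I \<sigma>)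
       = (\<integral>x. F x \<partial>gaussian_product I \<sigma>) / of_real (\<Prod>j<p. real (card I + 2 * j))"
proof -
  let ?N = "gaussian_product I \<sigma>" and ?Q = "quad_form I \<sigma>"
  have Re_F: "(\<lambda>x. Re (F x)) \<in> borel_measurable (PiM I (\<lambda>_. borel))"
    and Im_F: "(\<lambda>x. Im (F x)) \<in> borel_measurable (PiM I (\<lambda>_. borel))"
    by measurable
  note hom_Re = pos_homogeneous_Re[OF hom] and hom_Im = pos_homogeneous_Im[OF hom]
  have "integrable ?N (\<lambda>x. Re (F x) / ?Q x ^ p)" "integrable ?N (\<lambda>x. Im (F x) / ?Q x ^ p)"
    using integrable_Re[OF int] integrable_Im[OF int] by simp_all
  then have int_Re: "integrable ?N (\<lambda>x. Re (F x))" and int_Im: "integrable ?N (\<lambda>x. Im (F x))"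
    using integrable_divide_quad_form_power_iff[OF fin ne \<sigma> Re_F hom_Re]
      integrable_divide_quad_form_power_iff[OF fin ne \<sigma> Im_F hom_Im] by simp_all
  then have int_F: "integrable ?N F"
    by (simp only: integrable_complex_iff)
  define P where "P = (\<Prod>j<p. real (card I + 2 * j))"
  have "(\<integral>x. F x / of_real (?Q x ^ p) \<partial>?N) = (\<integral>x. F x \<partial>?N) / of_real P"
    using int_F int int_Re int_Im
    by (simp add: complex_eq_iff integral_divide_quad_form_power[OF fin ne \<sigma> Re_F hom_Re int_Re, folded P_def]
        integral_divide_quad_form_power[OF fin ne \<sigma> Im_F hom_Im int_Im, folded P_def]
        del: integral_Re integral_Im flip: integral_Re integral_Im)
  then show ?thesis
    unfolding P_def .
qed

section \<open>The coefficients as a Gaussian vector\<close>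

lemma sum_int_symmetric_interval:
  fixes f :: "int \<Rightarrow> 'b::comm_monoid_add"
  shows "(\<Sum>m\<in>{- int l..int l}. f m) = f 0 + (\<Sum>m\<in>{1..l}. f (int m) + f (- int m))"
proof (induction l)
  case (Suc l)
  have "{- int (Suc l)..int (Suc l)} = insert (int (Suc l)) (insert (- int (Suc l)) {- int l..int l})"
    by auto
  then show ?case
    using Suc.IH by (simp add: ac_simps)
qed simp

lemma monomial_u_cong:
  assumes "f 0 = g 0" and "\<And>i. i \<in> {1..k} \<Longrightarrow> f (ms i) = g (ms i)"
  shows "monomial_u f k ms q0 q q' = monomial_u g k ms q0 q q'"
  unfolding monomial_u_def using assms by (intro arg_cong2[where f = "(*)"] prod.cong) auto

lemma monomial_u_scale:
  "monomial_u (\<lambda>m. of_real c * f m) k ms q0 q q'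
     = of_real (c ^ (q0 + (\<Sum>i\<in>{1..k}. q i + q' i))) * monomial_u f k ms q0 q q'"
  by (simp add: monomial_u_def power_add power_sum power_mult_distrib prod.distrib mult_ac)

lemma norm_monomial_u_le:
  assumes "B \<ge> 0" and "norm (f 0) \<le> B" and "\<And>i. i \<in> {1..k} \<Longrightarrow> norm (f (ms i)) \<le> B"
  shows "norm (monomial_u f k ms q0 q q') \<le> B ^ (q0 + (\<Sum>i\<in>{1..k}. q i + q' i))"
proof -
  have "norm (monomial_u f k ms q0 q q') = norm (f 0) ^ q0 * (\<Prod>i\<in>{1..k}. norm (f (ms i)) ^ q i * norm (f (ms i)) ^ q' i)"
    by (simp add: monomial_u_def norm_mult norm_power prod_norm[symmetric])
  also have "\<dots> \<le> B ^ q0 * (\<Prod>i\<in>{1..k}. B ^ q i * B ^ q' i)"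
    using assms by (intro mult_mono power_mono prod_mono conjI mult_nonneg_nonneg prod_nonneg) auto
  also have "\<dots> = B ^ (q0 + (\<Sum>i\<in>{1..k}. q i + q' i))"
    by (simp add: power_add power_sum prod.distrib)
  finally show ?thesis .
qed

definition coeff_sd :: "real \<Rightarrow> nat \<times> bool \<Rightarrow> real" where
  "coeff_sd C i = (if fst i = 0 then sqrt C else sqrt (C / 2))"

definition coeff_of_coords :: "(nat \<times> bool \<Rightarrow> real) \<Rightarrow> nat \<Rightarrow> complex" where
  "coeff_of_coords x m = Complex (x (m, False)) (if m = 0 then 0 else x (m, True))"

lemma finite_coeff_index [simp]: "finite (coeff_index l)"
  by (simp add: coeff_index_def)

lemma coeff_index_ne_empty [simp]: "coeff_index l \<noteq> {}"
  by (simp add: coeff_index_def)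

lemma card_coeff_index: "card (coeff_index l) = 2 * l + 1"
proof -
  have "(0, False) \<notin> {1..l} \<times> (UNIV :: bool set)"
    by auto
  then show ?thesis
    by (simp add: coeff_index_def card_cartesian_product)
qed

lemma coeff_sd_pos: "C > 0 \<Longrightarrow> coeff_sd C i > 0"
  by (simp add: coeff_sd_def)

lemma quad_form_coeff_index:
  assumes "C > 0"
  shows "C * quad_form (coeff_index l) (coeff_sd C) x
       = (x (0, False))\<^sup>2 + 2 * (\<Sum>m\<in>{1..l}. (x (m, False))\<^sup>2 + (x (m, True))\<^sup>2)"
proof -
  have "(0, False) \<notin> {1..l} \<times> (UNIV :: bool set)"
    by auto
  then have "quad_form (coeff_index l) (coeff_sd C) x
      = (x (0, False))\<^sup>2 / C + (\<Sum>i\<in>{1..l} \<times> UNIV. (x i)\<^sup>2 / (coeff_sd C i)\<^sup>2)"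
    using assms by (simp add: quad_form_def coeff_index_def coeff_sd_def)
  also have "(\<Sum>i\<in>{1..l} \<times> UNIV. (x i)\<^sup>2 / (coeff_sd C i)\<^sup>2)
      = 2 / C * (\<Sum>m\<in>{1..l}. (x (m, False))\<^sup>2 + (x (m, True))\<^sup>2)"
    unfolding sum.cartesian_product' sum_distrib_left using assms
    by (intro sum.cong) (auto simp: coeff_sd_def UNIV_bool field_simps)
  finally show ?thesis
    using assms by (simp add: field_simps)
qed

lemma Chat_eq_sum_squares:
  assumes "Im (a 0 \<omega>) = 0"
  shows "(2 * real l + 1) * Chat l a \<omega>
       = (Re (a 0 \<omega>))\<^sup>2 + 2 * (\<Sum>m\<in>{1..l}. (Re (a m \<omega>))\<^sup>2 + (Im (a m \<omega>))\<^sup>2)"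
proof -
  have "(\<Sum>m\<in>{- int l..int l}. (cmod (coeff_ext a m \<omega>))\<^sup>2)
      = (cmod (a 0 \<omega>))\<^sup>2 + (\<Sum>m\<in>{1..l}. 2 * (cmod (a m \<omega>))\<^sup>2)"
    by (simp add: sum_int_symmetric_interval coeff_ext_def norm_mult norm_power)
  then show ?thesis
    using assms by (simp add: Chat_def cmod_power2 sum_distrib_left)
qed

lemma coeff_of_coords_scale_on:
  "m = 0 \<or> m \<in> {1..l} \<Longrightarrow> coeff_of_coords (scale_on (coeff_index l) c x) m = of_real c * coeff_of_coords x m"
  by (auto simp: coeff_of_coords_def scale_on_def coeff_index_def complex_eq_iff)

lemma norm_coeff_of_coords_le:
  assumes C: "C > 0" and m: "m = 0 \<or> m \<in> {1..l}"
  shows "(cmod (coeff_of_coords x m))\<^sup>2 \<le> C * quad_form (coeff_index l) (coeff_sd C) x"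
proof -
  let ?S = "\<Sum>m\<in>{1..l}. (x (m, False))\<^sup>2 + (x (m, True))\<^sup>2"
  have S_nonneg: "?S \<ge> 0"
    by (intro sum_nonneg) auto
  have S_le: "?S \<le> (x (0, False))\<^sup>2 + 2 * ?S"
    using S_nonneg zero_le_power2[of "x (0, False)"] by linarith
  show ?thesis
  proof (cases "m = 0")
    case True
    then show ?thesis
      unfolding quad_form_coeff_index[OF C] using S_nonneg by (simp add: coeff_of_coords_def cmod_power2)
  next
    case False
    with m have "(x (m, False))\<^sup>2 + (x (m, True))\<^sup>2 \<le> ?S"
      by (intro member_le_sum) auto
    with False have "(cmod (coeff_of_coords x m))\<^sup>2 \<le> ?S"
      by (simp add: coeff_of_coords_def cmod_power2)
    then show ?thesis
      unfolding quad_form_coeff_index[OF C] using S_le by linarith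
  qed
qed

lemma coeff_of_coords_measurable:
  assumes "m = 0 \<or> m \<in> {1..l}"
  shows "(\<lambda>x. coeff_of_coords x m) \<in> borel_measurable (PiM (coeff_index l) (\<lambda>_. borel))"
proof (cases "m = 0")
  case True
  have [measurable]: "(0, False) \<in> coeff_index l"
    by (simp add: coeff_index_def)
  show ?thesis
    unfolding coeff_of_coords_def Complex_eq using True by simp
next
  case False
  with assms have [measurable]: "(m, False) \<in> coeff_index l" "(m, True) \<in> coeff_index l"
    by (auto simp: coeff_index_def)
  show ?thesis
    unfolding coeff_of_coords_def Complex_eq using False by simp
qed

lemma monomial_coeffs_measurable:
  assumes ms: "ms ` {1..k} \<subseteq> {1..l}"
  shows "(\<lambda>x. monomial_u (coeff_of_coords x) k ms q0 q q') \<in> borel_measurable (PiM (coeff_index l) (\<lambda>_. borel))"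
  unfolding monomial_u_def
proof (intro borel_measurable_times borel_measurable_power borel_measurable_prod)
  show "(\<lambda>x. coeff_of_coords x 0) \<in> borel_measurable (PiM (coeff_index l) (\<lambda>_. borel))"
    by (rule coeff_of_coords_measurable) simp
  fix i assume "i \<in> {1..k}"
  with ms have coeff: "(\<lambda>x. coeff_of_coords x (ms i)) \<in> borel_measurable (PiM (coeff_index l) (\<lambda>_. borel))"
    by (intro coeff_of_coords_measurable disjI2) blast
  then show "(\<lambda>x. coeff_of_coords x (ms i)) \<in> borel_measurable (PiM (coeff_index l) (\<lambda>_. borel))" .
  show "(\<lambda>x. cnj (coeff_of_coords x (ms i))) \<in> borel_measurable (PiM (coeff_index l) (\<lambda>_. borel))"
    using coeff by (rule borel_measurable_continuous_on[rotated]) (intro continuous_intros)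
qed

lemma pos_homogeneous_monomial_coeffs:
  assumes ms: "ms ` {1..k} \<subseteq> {1..l}"
  shows "pos_homogeneous (coeff_index l) (q0 + (\<Sum>i\<in>{1..k}. q i + q' i))
           (\<lambda>x. monomial_u (coeff_of_coords x) k ms q0 q q')"
  unfolding pos_homogeneous_def
proof (intro allI impI)
  fix c :: real and x
  have "ms i \<in> {1..l}" if "i \<in> {1..k}" for i
    using ms that by blast
  then have "monomial_u (coeff_of_coords (scale_on (coeff_index l) c x)) k ms q0 q q'
      = monomial_u (\<lambda>m. of_real c * coeff_of_coords x m) k ms q0 q q'"
    by (intro monomial_u_cong coeff_of_coords_scale_on) auto
  then show "monomial_u (coeff_of_coords (scale_on (coeff_index l) c x)) k ms q0 q q'
      = c ^ (q0 + (\<Sum>i\<in>{1..k}. q i + q' i)) *\<^sub>R monomial_u (coeff_of_coords x) k ms q0 q q'"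
    by (simp add: monomial_u_scale scaleR_conv_of_real)
qed

lemma norm_monomial_coeffs_divide_le:
  assumes C: "C > 0" and ms: "ms ` {1..k} \<subseteq> {1..l}"
    and deg: "q0 + (\<Sum>i\<in>{1..k}. q i + q' i) = 2 * p"
  shows "norm (monomial_u (coeff_of_coords x) k ms q0 q q' / of_real (quad_form (coeff_index l) (coeff_sd C) x ^ p))
       \<le> C ^ p"
proof -
  let ?Q = "quad_form (coeff_index l) (coeff_sd C) x"
  have norm_le: "norm (coeff_of_coords x m) \<le> sqrt (C * ?Q)" if "m = 0 \<or> m \<in> {1..l}" for m
    using norm_coeff_of_coords_le[OF C that] by (simp add: real_le_rsqrt)
  have "ms i \<in> {1..l}" if "i \<in> {1..k}" for i
    using ms that by blast
  then have "norm (monomial_u (coeff_of_coords x) k ms q0 q q') \<le> sqrt (C * ?Q) ^ (2 * p)"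
    unfolding deg[symmetric] using C by (intro norm_monomial_u_le norm_le) auto
  also have "sqrt (C * ?Q) ^ (2 * p) = C ^ p * ?Q ^ p"
    using C by (simp add: power_mult power_mult_distrib)
  finally have F_le: "norm (monomial_u (coeff_of_coords x) k ms q0 q q') \<le> C ^ p * ?Q ^ p" .
  show ?thesis
  proof (cases "?Q ^ p = 0")
    case True
    show ?thesis
      unfolding True using C by simp
  next
    case False
    then have "?Q ^ p > 0"
      by (simp add: less_le del: power_eq_0_iff)
    with F_le show ?thesis
      by (simp add: norm_divide pos_divide_le_eq del: of_real_power)
  qed
qed

lemma integral_monomial_coeffs_divide_quad_form:
  assumes C: "C > 0" and ms: "ms ` {1..k} \<subseteq> {1..l}"
    and deg: "q0 + (\<Sum>i\<in>{1..k}. q i + q' i) = 2 * p"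
  shows "(\<integral>x. monomial_u (coeff_of_coords x) k ms q0 q q' / of_real (quad_form (coeff_index l) (coeff_sd C) x ^ p)
            \<partial>gaussian_product (coeff_index l) (coeff_sd C))
       = (\<integral>x. monomial_u (coeff_of_coords x) k ms q0 q q' \<partial>gaussian_product (coeff_index l) (coeff_sd C))
         / of_real (\<Prod>j<p. real (2 * l + 1 + 2 * j))"
proof -
  let ?N = "gaussian_product (coeff_index l) (coeff_sd C)" and ?Q = "quad_form (coeff_index l) (coeff_sd C)"
    and ?F = "\<lambda>x. monomial_u (coeff_of_coords x) k ms q0 q q'"
  interpret N: prob_space ?N
    using C by (intro prob_space_gaussian_product coeff_sd_pos)
  have F: "?F \<in> borel_measurable (PiM (coeff_index l) (\<lambda>_. borel))"
    using ms by (rule monomial_coeffs_measurable)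
  have "pos_homogeneous (coeff_index l) (q0 + (\<Sum>i\<in>{1..k}. q i + q' i)) ?F"
    using ms by (rule pos_homogeneous_monomial_coeffs)
  then have hom: "pos_homogeneous (coeff_index l) (2 * p) ?F"
    unfolding deg .
  have "integrable ?N (\<lambda>x. ?F x / of_real (?Q x ^ p))"
  proof (rule N.integrable_const_bound[where B = "C ^ p"])
    show "(\<lambda>x. ?F x / of_real (?Q x ^ p)) \<in> borel_measurable ?N"
      using F by measurable
  qed (intro AE_I2 norm_monomial_coeffs_divide_le[OF C ms deg])
  then have "(\<integral>x. ?F x / of_real (?Q x ^ p) \<partial>?N)
      = (\<integral>x. ?F x \<partial>?N) / of_real (\<Prod>j<p. real (card (coeff_index l) + 2 * j))"
    by (rule integral_divide_quad_form_power_complex[OF finite_coeff_index coeff_index_ne_empty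
          coeff_sd_pos[OF C] F hom])
  then show ?thesis
    by (simp only: card_coeff_index)
qed

lemma g_lp_eq: "g_lp l p = (2 * real l + 1) ^ p / (\<Prod>j<p. real (2 * l + 1 + 2 * j))"
  unfolding g_lp_def prod_dividef by (simp add: prod.atLeast1_atMost_eq algebra_simps)

locale isotropic_gaussian_alm = prob_space M for M :: "'a measure" +
  fixes a :: "nat \<Rightarrow> 'a \<Rightarrow> complex" and l :: nat and C :: real
  assumes C_pos: "C > 0"
    and distributed_Re_a0: "distributed M lborel (\<lambda>\<omega>. Re (a 0 \<omega>)) (normal_density 0 (sqrt C))"
    and Im_a0: "\<And>\<omega>. \<omega> \<in> space M \<Longrightarrow> Im (a 0 \<omega>) = 0"
    and distributed_Re: "\<And>m. m \<in> {1..l} \<Longrightarrow> distributed M lborel (\<lambda>\<omega>. Re (a m \<omega>)) (normal_density 0 (sqrt (C / 2)))"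
    and distributed_Im: "\<And>m. m \<in> {1..l} \<Longrightarrow> distributed M lborel (\<lambda>\<omega>. Im (a m \<omega>)) (normal_density 0 (sqrt (C / 2)))"
    and indep_coeff_coord: "indep_vars (\<lambda>_. borel) (coeff_coord a) (coeff_index l)"
begin

definition coords :: "'a \<Rightarrow> nat \<times> bool \<Rightarrow> real" where
  "coords \<omega> = restrict (\<lambda>i. coeff_coord a i \<omega>) (coeff_index l)"

lemma distributed_coeff_coord:
  assumes "i \<in> coeff_index l"
  shows "distributed M lborel (coeff_coord a i) (normal_density 0 (coeff_sd C i))"
proof -
  obtain m b where i: "i = (m, b)"
    by force
  show ?thesis
  proof (cases b)
    case True
    with assms i show ?thesis
      using distributed_Im by (auto simp: coeff_index_def coeff_coord_def coeff_sd_def)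
  next
    case False
    with assms i show ?thesis
      using distributed_Re_a0 distributed_Re by (auto simp: coeff_index_def coeff_coord_def coeff_sd_def)
  qed
qed

lemma coeff_coord_measurable: "i \<in> coeff_index l \<Longrightarrow> coeff_coord a i \<in> borel_measurable M"
  using distributed_measurable[OF distributed_coeff_coord] by simp

lemma coords_measurable: "coords \<in> M \<rightarrow>\<^sub>M PiM (coeff_index l) (\<lambda>_. borel)"
  unfolding coords_def by (intro measurable_restrict coeff_coord_measurable)

lemma distr_coords: "distr M (PiM (coeff_index l) (\<lambda>_. borel)) coords = gaussian_product (coeff_index l) (coeff_sd C)"
proof -
  have "distr M (PiM (coeff_index l) (\<lambda>_. borel)) coords = PiM (coeff_index l) (\<lambda>i. distr M borel (coeff_coord a i))"
    using indep_vars_iff_distr_eq_PiM'[OF coeff_index_ne_empty coeff_coord_measurable] indep_coeff_coord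
    unfolding coords_def by simp
  also have "\<dots> = gaussian_product (coeff_index l) (coeff_sd C)"
    unfolding gaussian_product_def
    by (intro PiM_cong refl) (simp add: distributed_distr_eq_density[OF distributed_coeff_coord, symmetric] cong: distr_cong)
  finally show ?thesis .
qed

lemma integral_coords:
  fixes G :: "(nat \<times> bool \<Rightarrow> real) \<Rightarrow> 'b::{banach, second_countable_topology}"
  assumes "G \<in> borel_measurable (PiM (coeff_index l) (\<lambda>_. borel))"
  shows "(\<integral>\<omega>. G (coords \<omega>) \<partial>M) = (\<integral>x. G x \<partial>gaussian_product (coeff_index l) (coeff_sd C))"
  using integral_distr[OF coords_measurable assms] by (simp add: distr_coords)

lemma coeff_eq_coeff_of_coords:
  assumes "\<omega> \<in> space M" and "m = 0 \<or> m \<in> {1..l}"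
  shows "a m \<omega> = coeff_of_coords (coords \<omega>) m"
  using assms Im_a0 by (auto simp: coords_def coeff_of_coords_def coeff_coord_def coeff_index_def complex_eq_iff)

lemma Chat_eq_quad_form:
  assumes "\<omega> \<in> space M"
  shows "Chat l a \<omega> = C * quad_form (coeff_index l) (coeff_sd C) (coords \<omega>) / (2 * real l + 1)"
proof -
  have "(2 * real l + 1) * Chat l a \<omega> = C * quad_form (coeff_index l) (coeff_sd C) (coords \<omega>)"
    unfolding Chat_eq_sum_squares[where a = a and l = l, OF Im_a0[OF assms]] quad_form_coeff_index[OF C_pos]
    by (simp add: coords_def coeff_coord_def coeff_index_def)
  then show ?thesis
    by (simp add: field_simps)
qed

lemma monomial_scaled_coeffs:
  assumes "\<omega> \<in> space M" and ms: "ms ` {1..k} \<subseteq> {1..l}"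
    and deg: "q0 + (\<Sum>i\<in>{1..k}. q i + q' i) = 2 * p"
  shows "monomial_u (\<lambda>m. a m \<omega> / of_real s) k ms q0 q q'
       = of_real ((1 / s) ^ (2 * p)) * monomial_u (coeff_of_coords (coords \<omega>)) k ms q0 q q'"
proof -
  have "monomial_u (\<lambda>m. a m \<omega> / of_real s) k ms q0 q q'
      = monomial_u (\<lambda>m. of_real (1 / s) * coeff_of_coords (coords \<omega>) m) k ms q0 q q'"
    using assms(1) ms by (intro monomial_u_cong) (auto simp: coeff_eq_coeff_of_coords image_subset_iff)
  then show ?thesis
    unfolding monomial_u_scale deg .
qed

lemma integral_monomial_normalized:
  assumes ms: "ms ` {1..k} \<subseteq> {1..l}"
    and deg: "q0 + (\<Sum>i\<in>{1..k}. q i + q' i) = 2 * p"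
  shows "(\<integral>\<omega>. monomial_u (\<lambda>m. a m \<omega> / of_real (sqrt C)) k ms q0 q q' \<partial>M)
       = of_real ((1 / C) ^ p)
         * (\<integral>x. monomial_u (coeff_of_coords x) k ms q0 q q' \<partial>gaussian_product (coeff_index l) (coeff_sd C))"
proof -
  let ?F = "\<lambda>x. monomial_u (coeff_of_coords x) k ms q0 q q'"
  have "(1 / sqrt C) ^ (2 * p) = (1 / C) ^ p"
    using C_pos by (simp add: power_mult power_divide)
  then have "monomial_u (\<lambda>m. a m \<omega> / of_real (sqrt C)) k ms q0 q q' = of_real ((1 / C) ^ p) * ?F (coords \<omega>)"
    if "\<omega> \<in> space M" for \<omega>
    using monomial_scaled_coeffs[OF that ms deg, of "sqrt C"] by (simp only:)
  then have "(\<integral>\<omega>. monomial_u (\<lambda>m. a m \<omega> / of_real (sqrt C)) k ms q0 q q' \<partial>M)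
      = (\<integral>\<omega>. of_real ((1 / C) ^ p) * ?F (coords \<omega>) \<partial>M)"
    by (intro Bochner_Integration.integral_cong) simp_all
  also have "\<dots> = of_real ((1 / C) ^ p) * (\<integral>\<omega>. ?F (coords \<omega>) \<partial>M)"
    by (rule integral_mult_right_zero)
  also have "(\<integral>\<omega>. ?F (coords \<omega>) \<partial>M) = (\<integral>x. ?F x \<partial>gaussian_product (coeff_index l) (coeff_sd C))"
    by (rule integral_coords[OF monomial_coeffs_measurable[OF ms]])
  finally show ?thesis .
qed

lemma integral_monomial_empirically_normalized:
  assumes ms: "ms ` {1..k} \<subseteq> {1..l}"
    and deg: "q0 + (\<Sum>i\<in>{1..k}. q i + q' i) = 2 * p"
  shows "(\<integral>\<omega>. monomial_u (\<lambda>m. a m \<omega> / of_real (sqrt (Chat l a \<omega>))) k ms q0 q q' \<partial>M)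
       = of_real (((2 * real l + 1) / C) ^ p)
         * (\<integral>x. monomial_u (coeff_of_coords x) k ms q0 q q' / of_real (quad_form (coeff_index l) (coeff_sd C) x ^ p)
             \<partial>gaussian_product (coeff_index l) (coeff_sd C))"
proof -
  let ?F = "\<lambda>x. monomial_u (coeff_of_coords x) k ms q0 q q'" and ?Q = "quad_form (coeff_index l) (coeff_sd C)"
  have "monomial_u (\<lambda>m. a m \<omega> / of_real (sqrt (Chat l a \<omega>))) k ms q0 q q'
      = of_real (((2 * real l + 1) / C) ^ p) * (?F (coords \<omega>) / of_real (?Q (coords \<omega>) ^ p))"
    if "\<omega> \<in> space M" for \<omega>
  proof -
    have "(1 / sqrt (Chat l a \<omega>)) ^ (2 * p) = ((2 * real l + 1) / C) ^ p / ?Q (coords \<omega>) ^ p"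
      using C_pos by (simp add: Chat_eq_quad_form[OF that] power_mult power_divide power_mult_distrib)
    with monomial_scaled_coeffs[OF that ms deg, of "sqrt (Chat l a \<omega>)"] show ?thesis
      by (simp only: of_real_divide times_divide_eq_left times_divide_eq_right)
  qed
  then have "(\<integral>\<omega>. monomial_u (\<lambda>m. a m \<omega> / of_real (sqrt (Chat l a \<omega>))) k ms q0 q q' \<partial>M)
      = (\<integral>\<omega>. of_real (((2 * real l + 1) / C) ^ p) * (?F (coords \<omega>) / of_real (?Q (coords \<omega>) ^ p)) \<partial>M)"
    by (intro Bochner_Integration.integral_cong) simp_all
  also have "\<dots> = of_real (((2 * real l + 1) / C) ^ p) * (\<integral>\<omega>. ?F (coords \<omega>) / of_real (?Q (coords \<omega>) ^ p) \<partial>M)"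
    by (rule integral_mult_right_zero)
  also have "(\<integral>\<omega>. ?F (coords \<omega>) / of_real (?Q (coords \<omega>) ^ p) \<partial>M)
      = (\<integral>x. ?F x / of_real (?Q x ^ p) \<partial>gaussian_product (coeff_index l) (coeff_sd C))"
  proof (rule integral_coords)
    have "?F \<in> borel_measurable (PiM (coeff_index l) (\<lambda>_. borel))"
      using ms by (rule monomial_coeffs_measurable)
    then show "(\<lambda>x. ?F x / of_real (?Q x ^ p)) \<in> borel_measurable (PiM (coeff_index l) (\<lambda>_. borel))"
      by measurable
  qed
  finally show ?thesis .
qed

end

theorem theorem4p1:
  fixes M :: "'a measure" and a :: "nat \<Rightarrow> 'a \<Rightarrow> complex"
    and l k p q0 :: nat and C :: real and ms q q' :: "nat \<Rightarrow> nat"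
  assumes "prob_space M"
    and "l \<ge> 1" and "C > 0"
    and "distributed M lborel (\<lambda>\<omega>. Re (a 0 \<omega>)) (normal_density 0 (sqrt C))"
    and "\<And>\<omega>. \<omega> \<in> space M \<Longrightarrow> Im (a 0 \<omega>) = 0"
    and "\<And>m. m \<in> {1..l} \<Longrightarrow> distributed M lborel (\<lambda>\<omega>. Re (a m \<omega>)) (normal_density 0 (sqrt (C / 2)))"
    and "\<And>m. m \<in> {1..l} \<Longrightarrow> distributed M lborel (\<lambda>\<omega>. Im (a m \<omega>)) (normal_density 0 (sqrt (C / 2)))"
    and "prob_space.indep_vars M (\<lambda>_. borel) (coeff_coord a) (coeff_index l)"
    and "strict_mono_on {1..k} ms"
    and "\<And>i. i \<in> {1..k} \<Longrightarrow> 1 \<le> ms i \<and> ms i \<le> l"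
    and "q0 + (\<Sum>i\<in>{1..k}. q i + q' i) = 2 * p"
  shows "integral\<^sup>L M (\<lambda>\<omega>. monomial_u (\<lambda>m. a m \<omega> / complex_of_real (sqrt (Chat l a \<omega>))) k ms q0 q q')
       = integral\<^sup>L M (\<lambda>\<omega>. monomial_u (\<lambda>m. a m \<omega> / complex_of_real (sqrt C)) k ms q0 q q')
         * complex_of_real (g_lp l p)"
proof -
  interpret isotropic_gaussian_alm M a l C
    using assms(1,3-8) by (simp add: isotropic_gaussian_alm_def isotropic_gaussian_alm_axioms_def)
  have ms: "ms ` {1..k} \<subseteq> {1..l}"
    using assms(10) by fastforce
  note deg = assms(11)
  let ?N = "gaussian_product (coeff_index l) (coeff_sd C)"
    and ?F = "\<lambda>x. monomial_u (coeff_of_coords x) k ms q0 q q'"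
  define P where "P = (\<Prod>j<p. real (2 * l + 1 + 2 * j))"
  have "P > 0"
    unfolding P_def by (intro prod_pos) simp
  have "integral\<^sup>L M (\<lambda>\<omega>. monomial_u (\<lambda>m. a m \<omega> / complex_of_real (sqrt (Chat l a \<omega>))) k ms q0 q q')
      = of_real (((2 * real l + 1) / C) ^ p) * ((\<integral>x. ?F x \<partial>?N) / of_real P)"
    unfolding integral_monomial_empirically_normalized[OF ms deg] P_def
      integral_monomial_coeffs_divide_quad_form[OF C_pos ms deg] ..
  also have "\<dots> = of_real ((1 / C) ^ p) * (\<integral>x. ?F x \<partial>?N) * of_real (g_lp l p)"
    unfolding g_lp_eq P_def[symmetric] using \<open>P > 0\<close> C_pos by (simp add: field_simps)
  also have "of_real ((1 / C) ^ p) * (\<integral>x. ?F x \<partial>?N)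
      = integral\<^sup>L M (\<lambda>\<omega>. monomial_u (\<lambda>m. a m \<omega> / complex_of_real (sqrt C)) k ms q0 q q')"
    by (rule integral_monomial_normalized[OF ms deg, symmetric])
  finally show ?thesis .
qed

end
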